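(* Let $f:\mathbb{R}^n\to\mathbb{R}^n$ be locally Lipschitz with $f(0)=0$, let $z(t,x)$ denote the solution of $\dot z=f(z)$ with $z(0)=x$, and let $V\in C^1(\mathbb{R}^n;\mathbb{R}^+)$ be a Lyapunov function for $\dot z=f(z)$. Then: (i) There exists a locally Lipschitz positive definite $W:\mathbb{R}^n\to\mathbb{R}^+$ with $W(x)\le-\nabla V(x)f(x)$ for all $x\in\mathbb{R}^n$. (ii) Let $l_f:\mathbb{R}^n\to(0,+\infty)$ be continuous with $l_f(x)\ge\sup\{|f(y)-f(z)|/|y-z|: y\ne z,\ \max\{V(y),V(z)\}\le V(x)\}$ for all $x\ne0$. Then for every $b>0$ there exists a continuous positive definite $\tilde W:\mathbb{R}^n\to\mathbb{R}^+$ such that $V(z(h,x))\le V(x)-h\tilde W(x)$ for all $x\in\mathbb{R}^n$ and all $h\in[0,b/l_f(x)]$. (iii) Let $b>0$, let $l_f$ be as in (ii), let $W$ be a locally Lipschitz positive definite function with $W(x)\le-\nabla V(x)f(x)$ for all $x$, and let $l_W^b:\mathbb{R}^n\to\mathbb{R}^+$ be continuous, positive definite, with $l_W^b(x)\ge\sup\{|W(y)-W(z)|/|y-z|: y\ne z,\ \max\{|y|,|z|\}\le\exp(b)|x|\}$ for all $x\ne0$. If there exist $\varepsilon,c>0$ with $|x|\,l_W^b(x)\le cW(x)$ for all $x\in B_\varepsilon(0)$, then for each $\lambda\in(0,1)$ and each continuous $\varphi:\mathbb{R}^n\to(0,+\infty)$ satisfying $$\varphi(x)\le\min\Big\{\frac{b}{l_f(x)},\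 \frac{(1-\lambda)\exp(-b)W(x)}{|x|\,l_W^b(x)\,l_f(x)}\Big\}\quad\forall x\ne0,$$ one has $V(z(h,x))\le V(x)-\lambda hW(x)$ for all $x\in\mathbb{R}^n$ and $h\in[0,\varphi(x)]$.
   Context: A Lyapunov function for $\dot z=f(z)$ is a positive definite, radially unbounded $V\in C^1(\mathbb{R}^n;\mathbb{R}^+)$ with $\nabla V(x)f(x)<0$ for all $x\ne0$. Positive definite means $V(0)=0$ and $V(x)>0$ for $x\ne0$; radially unbounded means every sublevel set $\{V\le M\}$ is compact. $B_\varepsilon(0)$ is the open ball of radius $\varepsilon$ centered at 0. *)

theory Defs
  imports "HOL-Analysis.Analysis"
begin

definition loc_lipschitz :: "('a::metric_space \<Rightarrow> 'b::metric_space) \<Rightarrow> bool" where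
  "loc_lipschitz g \<longleftrightarrow> (\<forall>x. \<exists>u>0. \<exists>L. lipschitz_on L (cball x u) g)"

definition pos_def :: "('a::real_vector \<Rightarrow> real) \<Rightarrow> bool" where
  "pos_def g \<longleftrightarrow> g 0 = 0 \<and> (\<forall>x. x \<noteq> 0 \<longrightarrow> g x > 0)"

definition rad_unbounded :: "('a::real_normed_vector \<Rightarrow> real) \<Rightarrow> bool" where
  "rad_unbounded g \<longleftrightarrow> (\<forall>M. compact {x. g x \<le> M})"

definition C1_with_gradient :: "('a::euclidean_space \<Rightarrow> real) \<Rightarrow> ('a \<Rightarrow> 'a) \<Rightarrow> bool" where
  "C1_with_gradient V gV \<longleftrightarrow> continuous_on UNIV gV \<and>
     (\<forall>x. (V has_derivative (\<lambda>v. gV x \<bullet> v)) (at x))"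

definition lyapunov :: "('a::euclidean_space \<Rightarrow> real) \<Rightarrow> ('a \<Rightarrow> 'a) \<Rightarrow> ('a \<Rightarrow> 'a) \<Rightarrow> bool" where
  "lyapunov V gV f \<longleftrightarrow> C1_with_gradient V gV \<and> pos_def V \<and> rad_unbounded V \<and>
     (\<forall>x. x \<noteq> 0 \<longrightarrow> gV x \<bullet> f x < 0)"

definition is_flow :: "('a::euclidean_space \<Rightarrow> 'a) \<Rightarrow> (real \<Rightarrow> 'a \<Rightarrow> 'a) \<Rightarrow> bool" where
  "is_flow f z \<longleftrightarrow> (\<forall>x. z 0 x = x \<and>
     (\<forall>t\<ge>0. ((\<lambda>s. z s x) has_vector_derivative f (z t x)) (at t within {0..})))"

end

theory Submission
  imports Defs
begin

(* (i)  The dissipation g = -gV . f is continuous, nonnegative and positive definite; its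
        1-Lipschitz lower envelope  W x = inf_y (g y + |x - y|)  is then a locally Lipschitz,
        positive definite minorant of g.
   (ii), (iii) Both rest on one comparison argument: if W <= g and W decays along the orbit
        of x at most linearly, W x - W (z s x) <= K s, then integrating d/dt V(z t x) <= -W(z t x)
        gives  V (z h x) <= V x - h W x + K h^2 / 2.
        On the horizon h <= b / l_f(x) the orbit stays in the sublevel set of V x, so |f| grows at
        most linearly there, and Gronwall gives |z s x| <= e^b |x| and |z s x - x| <= s l_f(x) e^b |x|.
        This yields K = l_f(x) e^b |x| for the 1-Lipschitz envelope in (ii), and
        K = l_W^b(x) l_f(x) e^b |x| in (iii).  In (ii) the quadratic error is absorbed by a
        positive definite rate; in (iii) the bound on phi makes it at most (1 - lambda) h W x. *)

definition sublevel_lipschitz_bound ::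
  "('a::real_normed_vector \<Rightarrow> real) \<Rightarrow> ('a \<Rightarrow> 'a) \<Rightarrow> ('a \<Rightarrow> real) \<Rightarrow> bool" where
  "sublevel_lipschitz_bound V f lf \<longleftrightarrow>
     (\<forall>x. x \<noteq> 0 \<longrightarrow> (\<forall>y w. y \<noteq> w \<and> max (V y) (V w) \<le> V x \<longrightarrow>
        norm (f y - f w) / norm (y - w) \<le> lf x))"

definition ball_lipschitz_bound ::
  "real \<Rightarrow> ('a::real_normed_vector \<Rightarrow> real) \<Rightarrow> ('a \<Rightarrow> real) \<Rightarrow> bool" where
  "ball_lipschitz_bound b W lW \<longleftrightarrow>
     (\<forall>x. x \<noteq> 0 \<longrightarrow> (\<forall>y w. y \<noteq> w \<and> max (norm y) (norm w) \<le> exp b * norm x \<longrightarrow>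
        \<bar>W y - W w\<bar> / norm (y - w) \<le> lW x))"

lemma sublevel_lipschitz_boundD:
  assumes "sublevel_lipschitz_bound V f lf" "x \<noteq> 0" "V y \<le> V x" "V w \<le> V x"
  shows "norm (f y - f w) \<le> lf x * norm (y - w)"
proof (cases "y = w")
  case False
  then have "norm (f y - f w) / norm (y - w) \<le> lf x"
    using assms unfolding sublevel_lipschitz_bound_def by auto
  with False show ?thesis by (simp add: divide_le_eq mult.commute)
qed simp

lemma ball_lipschitz_boundD:
  assumes "ball_lipschitz_bound b W lW" "x \<noteq> 0"
    "norm y \<le> exp b * norm x" "norm w \<le> exp b * norm x"
  shows "\<bar>W y - W w\<bar> \<le> lW x * norm (y - w)"
proof (cases "y = w")
  case False
  then have "\<bar>W y - W w\<bar> / norm (y - w) \<le> lW x"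
    using assms unfolding ball_lipschitz_bound_def by auto
  with False show ?thesis by (simp add: divide_le_eq mult.commute)
qed simp

text \<open>On the sublevel set through x, f grows at most linearly, since f 0 = 0
  and 0 lies in every sublevel set of a positive definite V.\<close>
lemma sublevel_linear_growth:
  assumes "sublevel_lipschitz_bound V f lf" "pos_def V" "f 0 = 0" "x \<noteq> 0" "V y \<le> V x"
  shows "norm (f y) \<le> lf x * norm y"
proof -
  have "V 0 \<le> V x" using assms(2,4) by (simp add: pos_def_def less_imp_le)
  then show ?thesis
    using sublevel_lipschitz_boundD[OF assms(1,4,5), of 0] assms(3) by simp
qed

section \<open>Calculus along the flow\<close>

lemma flow_initial: "is_flow f z \<Longrightarrow> z 0 x = x"
  by (simp add: is_flow_def)

lemma flow_has_vector_derivative: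
  assumes "is_flow f z" "t > 0"
  shows "((\<lambda>s. z s x) has_vector_derivative f (z t x)) (at t)"
proof -
  have "((\<lambda>s. z s x) has_vector_derivative f (z t x)) (at t within {0..})"
    using assms unfolding is_flow_def by auto
  moreover have "at t within {0..} = at t"
    using assms(2) by (intro at_within_interior) auto
  ultimately show ?thesis by simp
qed

lemma flow_continuous_on:
  assumes "is_flow f z"
  shows "continuous_on {0..} (\<lambda>s. z s x)"
  using assms unfolding is_flow_def by (intro continuous_on_vector_derivative) auto

lemma C1_continuous:
  assumes "C1_with_gradient V gV"
  shows "continuous_on UNIV V"
  using assms unfolding C1_with_gradient_def
  by (meson continuous_at_imp_continuous_on has_derivative_continuous)

lemma lyapunov_derivative_along_flow:
  assumes "C1_with_gradient V gV" "is_flow f z" "t > 0"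
  shows "((\<lambda>s. V (z s x)) has_real_derivative (gV (z t x) \<bullet> f (z t x))) (at t)"
proof -
  have "((\<lambda>s. z s x) has_derivative (\<lambda>h. h *\<^sub>R f (z t x))) (at t)"
    using flow_has_vector_derivative[OF assms(2,3)] by (simp add: has_vector_derivative_def)
  moreover have "(V has_derivative (\<lambda>v. gV (z t x) \<bullet> v)) (at (z t x))"
    using assms(1) unfolding C1_with_gradient_def by auto
  ultimately have "((V \<circ> (\<lambda>s. z s x)) has_derivative
      ((\<lambda>v. gV (z t x) \<bullet> v) \<circ> (\<lambda>h. h *\<^sub>R f (z t x)))) (at t)"
    by (rule diff_chain_at)
  moreover have "(\<lambda>v. gV (z t x) \<bullet> v) \<circ> (\<lambda>h. h *\<^sub>R f (z t x)) =
      (\<lambda>h. (gV (z t x) \<bullet> f (z t x)) * h)"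
    by (auto simp: fun_eq_iff)
  ultimately show ?thesis
    by (simp add: has_field_derivative_def o_def)
qed

lemma lyapunov_continuous_along_flow:
  assumes "C1_with_gradient V gV" "is_flow f z"
  shows "continuous_on {0..} (\<lambda>s. V (z s x))"
  using continuous_on_compose2[OF C1_continuous[OF assms(1)] flow_continuous_on[OF assms(2)]]
  by auto

lemma lyapunov_nonincreasing_along_flow:
  assumes C1: "C1_with_gradient V gV" and fl: "is_flow f z"
    and dissip: "\<And>y. gV y \<bullet> f y \<le> 0" and st: "0 \<le> s" "s \<le> t"
  shows "V (z t x) \<le> V (z s x)"
proof (rule DERIV_nonpos_imp_decreasing_open[OF st(2)])
  fix u assume "s < u" "u < t"
  then show "\<exists>y. ((\<lambda>s. V (z s x)) has_real_derivative y) (at u) \<and> y \<le> 0"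
    using lyapunov_derivative_along_flow[OF C1 fl, of u x] dissip st by force
next
  show "continuous_on {s..t} (\<lambda>s. V (z s x))"
    by (rule continuous_on_subset[OF lyapunov_continuous_along_flow[OF C1 fl]]) (use st in auto)
qed

lemma lyapunov_dissipative:
  assumes "lyapunov V gV f" "f 0 = 0"
  shows "gV y \<bullet> f y \<le> 0"
  using assms by (cases "y = 0") (auto simp: lyapunov_def less_imp_le)

lemma lyapunov_below_initial:
  assumes lyap: "lyapunov V gV f" and f0: "f 0 = 0" and fl: "is_flow f z" and h: "0 \<le> h"
  shows "V (z h x) \<le> V x"
  using lyapunov_nonincreasing_along_flow[OF _ fl lyapunov_dissipative[OF lyap f0] order.refl h]
    lyap by (simp add: lyapunov_def flow_initial[OF fl])

text \<open>Gronwall's inequality for \<bar>z t x\<bar>, applied to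
  exp (-2Lt) |z t x|^2, whose derivative is nonpositive when
  \<bar>f\<bar> \<le> L \<bar>\<cdot>\<bar> on the orbit.\<close>
lemma flow_norm_growth:
  assumes fl: "is_flow f z" and h: "h \<ge> 0"
    and growth: "\<And>t. 0 < t \<Longrightarrow> t < h \<Longrightarrow> norm (f (z t x)) \<le> L * norm (z t x)"
  shows "norm (z h x) \<le> exp (L * h) * norm x"
proof -
  let ?u = "\<lambda>s. exp (- (2 * L * s)) * (z s x \<bullet> z s x)"
  have "?u h \<le> ?u 0"
  proof (rule DERIV_nonpos_imp_decreasing_open[OF h])
    fix t assume t: "0 < t" "t < h"
    have orbit_deriv: "((\<lambda>s. z s x) has_derivative (\<lambda>v. v *\<^sub>R f (z t x))) (at t)"
      using flow_has_vector_derivative[OF fl t(1), of x] unfolding has_vector_derivative_def .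
    have "((\<lambda>s. z s x \<bullet> z s x) has_derivative
        (\<lambda>h. z t x \<bullet> (h *\<^sub>R f (z t x)) + (h *\<^sub>R f (z t x)) \<bullet> z t x)) (at t)"
      by (rule has_derivative_inner[OF orbit_deriv orbit_deriv])
    moreover have "(\<lambda>h. z t x \<bullet> (h *\<^sub>R f (z t x)) + (h *\<^sub>R f (z t x)) \<bullet> z t x) =
        (\<lambda>h. (2 * (z t x \<bullet> f (z t x))) * h)"
      by (auto simp: fun_eq_iff inner_commute algebra_simps)
    ultimately have "((\<lambda>s. z s x \<bullet> z s x) has_real_derivative 2 * (z t x \<bullet> f (z t x))) (at t)"
      by (simp add: has_field_derivative_def)
    then have u_deriv: "(?u has_real_derivative
        exp (- (2 * L * t)) * (2 * (z t x \<bullet> f (z t x)) - 2 * L * (z t x \<bullet> z t x))) (at t)"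
      by (auto intro!: derivative_eq_intros simp: algebra_simps)
    have "z t x \<bullet> f (z t x) \<le> L * (z t x \<bullet> z t x)"
    proof -
      have "z t x \<bullet> f (z t x) \<le> norm (z t x) * norm (f (z t x))" by (rule norm_cauchy_schwarz)
      also have "\<dots> \<le> norm (z t x) * (L * norm (z t x))"
        using growth[OF t] by (simp add: mult_left_mono)
      finally show ?thesis by (simp add: dot_square_norm power2_eq_square algebra_simps)
    qed
    then have "exp (- (2 * L * t)) * (2 * (z t x \<bullet> f (z t x)) - 2 * L * (z t x \<bullet> z t x)) \<le> 0"
      by (intro mult_nonneg_nonpos) auto
    with u_deriv show "\<exists>y. (?u has_real_derivative y) (at t) \<and> y \<le> 0" by blast
  next
    show "continuous_on {0..h} ?u"
      using continuous_on_subset[OF flow_continuous_on[OF fl]] by (intro continuous_intros) auto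
  qed
  then have "(norm (z h x))\<^sup>2 \<le> (exp (L * h) * norm x)\<^sup>2"
    by (simp add: flow_initial[OF fl] exp_minus field_simps power2_norm_eq_inner
        power_mult_distrib exp_double[symmetric] mult.assoc)
  then show ?thesis by (rule power2_le_imp_le) simp
qed

lemma flow_displacement:
  assumes fl: "is_flow f z" and s: "s \<ge> 0"
    and bnd: "\<And>t. 0 < t \<Longrightarrow> t < s \<Longrightarrow> norm (f (z t x)) \<le> B"
  shows "norm (z s x - x) \<le> s * B"
proof (cases "s = 0")
  case True then show ?thesis by (simp add: flow_initial[OF fl])
next
  case False
  then have s0: "0 < s" using s by simp
  have "\<exists>t\<in>{0<..<s}. norm (z s x - z 0 x) \<le> norm ((s - 0) *\<^sub>R f (z t x))"
  proof (rule mvt_general[OF s0])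
    show "continuous_on {0..s} (\<lambda>s. z s x)"
      by (rule continuous_on_subset[OF flow_continuous_on[OF fl]]) auto
    fix t assume "0 < t" "t < s"
    then show "((\<lambda>s. z s x) has_derivative (\<lambda>h. h *\<^sub>R f (z t x))) (at t)"
      using flow_has_vector_derivative[OF fl] by (simp add: has_vector_derivative_def)
  qed
  then obtain t where t: "0 < t" "t < s" "norm (z s x - x) \<le> s * norm (f (z t x))"
    using s0 by (auto simp: flow_initial[OF fl])
  moreover have "s * norm (f (z t x)) \<le> s * B"
    using bnd[OF t(1,2)] s by (rule mult_left_mono)
  ultimately show ?thesis by linarith
qed

section \<open>Localisation of the orbit on the horizon b / lf x\<close>

text \<open>Along an orbit V does not increase, so the orbit stays in the sublevel set through
  x; there f grows linearly, and for t \<le> b / lf x the orbit stays in the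
  ball of radius exp b * norm x and moves at most t * lf x * exp b * norm x.\<close>
lemma orbit_localisation:
  assumes lyap: "lyapunov V gV f" and f0: "f 0 = 0" and fl: "is_flow f z"
    and lf: "sublevel_lipschitz_bound V f lf" "lf x > 0"
    and x: "x \<noteq> 0" and b: "b > 0" and t: "0 \<le> t" "t \<le> b / lf x"
  shows "norm (z t x) \<le> exp b * norm x"
    and "norm (z t x - x) \<le> t * (lf x * exp b * norm x)"
proof -
  have pdV: "pos_def V" using lyap by (simp add: lyapunov_def)
  have growth: "norm (f (z s x)) \<le> lf x * norm (z s x)" if "0 \<le> s" for s
    using sublevel_linear_growth[OF lf(1) pdV f0 x lyapunov_below_initial[OF lyap f0 fl that]] .
  have ball: "norm (z s x) \<le> exp b * norm x" if "0 \<le> s" "s \<le> b / lf x" for s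
  proof -
    have "norm (z s x) \<le> exp (lf x * s) * norm x"
      using flow_norm_growth[OF fl that(1)] growth by simp
    also have "\<dots> \<le> exp b * norm x"
      using that lf(2) by (intro mult_right_mono) (auto simp: field_simps)
    finally show ?thesis .
  qed
  then show "norm (z t x) \<le> exp b * norm x" using t .
  show "norm (z t x - x) \<le> t * (lf x * exp b * norm x)"
  proof (rule flow_displacement[OF fl t(1)])
    fix s assume "0 < s" "s < t"
    then have "lf x * norm (z s x) \<le> lf x * (exp b * norm x)"
      using ball[of s] t lf(2) by (intro mult_left_mono) auto
    then show "norm (f (z s x)) \<le> lf x * exp b * norm x"
      using growth[of s] \<open>0 < s\<close> by (simp add: mult.assoc)
  qed
qed

section \<open>The comparison lemma\<close>

lemma lyapunov_quadratic_decrease: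
  assumes C1: "C1_with_gradient V gV" and fl: "is_flow f z" and h: "h \<ge> 0"
    and W_le: "\<And>y. W y \<le> - (gV y \<bullet> f y)"
    and drift: "\<And>s. 0 < s \<Longrightarrow> s < h \<Longrightarrow> W x - W (z s x) \<le> K * s"
  shows "V (z h x) \<le> V x - W x * h + K * h\<^sup>2 / 2"
proof -
  let ?p = "\<lambda>s. V (z s x) + W x * s - K * s\<^sup>2 / 2"
  have "?p h \<le> ?p 0"
  proof (rule DERIV_nonpos_imp_decreasing_open[OF h])
    fix t assume t: "0 < t" "t < h"
    have "(?p has_real_derivative (gV (z t x) \<bullet> f (z t x) + W x - K * t)) (at t)"
      using lyapunov_derivative_along_flow[OF C1 fl t(1)] by (auto intro!: derivative_eq_intros)
    moreover have "gV (z t x) \<bullet> f (z t x) + W x - K * t \<le> 0"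
      using W_le[of "z t x"] drift[OF t] by linarith
    ultimately show "\<exists>y. (?p has_real_derivative y) (at t) \<and> y \<le> 0" by blast
  next
    show "continuous_on {0..h} ?p"
      using continuous_on_subset[OF lyapunov_continuous_along_flow[OF C1 fl]]
      by (intro continuous_intros) auto
  qed
  then show ?thesis by (simp add: flow_initial[OF fl])
qed

section \<open>Part (i): a Lipschitz minorant of the dissipation\<close>

definition lip_envelope :: "('a::real_normed_vector \<Rightarrow> real) \<Rightarrow> 'a \<Rightarrow> real" where
  "lip_envelope g x = Inf (range (\<lambda>y. g y + norm (x - y)))"

context
  fixes g :: "'a::real_normed_vector \<Rightarrow> real"
  assumes g_nonneg: "\<And>y. g y \<ge> 0"
begin

lemma lip_envelope_le: "lip_envelope g x \<le> g y + norm (x - y)"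
  unfolding lip_envelope_def
  by (rule cInf_lower) (auto intro!: bdd_belowI[where m=0] add_nonneg_nonneg g_nonneg)

lemma lip_envelope_ge: "(\<And>y. m \<le> g y + norm (x - y)) \<Longrightarrow> m \<le> lip_envelope g x"
  unfolding lip_envelope_def by (rule cInf_greatest) auto

lemma lip_envelope_nonneg: "lip_envelope g x \<ge> 0"
  by (rule lip_envelope_ge) (simp add: add_nonneg_nonneg g_nonneg)

lemma lip_envelope_below: "lip_envelope g x \<le> g x"
  using lip_envelope_le[of x x] by simp

lemma lip_envelope_lipschitz_step: "lip_envelope g x \<le> lip_envelope g x' + norm (x - x')"
proof -
  have "lip_envelope g x - norm (x - x') \<le> lip_envelope g x'"
  proof (rule lip_envelope_ge)
    fix y
    have "lip_envelope g x \<le> g y + norm (x - y)" by (rule lip_envelope_le)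
    also have "norm (x - y) \<le> norm (x' - y) + norm (x - x')"
      using norm_triangle_ineq[of "x - x'" "x' - y"] by simp
    finally show "lip_envelope g x - norm (x - x') \<le> g y + norm (x' - y)" by simp
  qed
  then show ?thesis by simp
qed

lemma lip_envelope_lipschitz: "lipschitz_on 1 S (lip_envelope g)"
proof (rule lipschitz_onI)
  fix x y
  show "dist (lip_envelope g x) (lip_envelope g y) \<le> 1 * dist x y"
    using lip_envelope_lipschitz_step[of x y] lip_envelope_lipschitz_step[of y x]
    by (simp add: dist_norm dist_real_def norm_minus_commute)
qed simp

lemma lip_envelope_loc_lipschitz: "loc_lipschitz (lip_envelope g)"
  unfolding loc_lipschitz_def using lip_envelope_lipschitz zero_less_one by blast

lemma lip_envelope_continuous: "continuous_on UNIV (lip_envelope g)"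
  by (rule lipschitz_on_continuous_on[OF lip_envelope_lipschitz])

text \<open>The envelope of a continuous positive definite function is positive definite: near
  x the values of g stay above g x / 2, away from x the
  distance term is large.\<close>
lemma lip_envelope_pos_def:
  assumes cont: "continuous_on UNIV g" and pd: "pos_def g"
  shows "pos_def (lip_envelope g)"
  unfolding pos_def_def
proof safe
  show "lip_envelope g 0 = 0"
    using lip_envelope_below[of 0] lip_envelope_nonneg[of 0] pd by (simp add: pos_def_def)
next
  fix x :: 'a assume "x \<noteq> 0"
  then have gx: "g x > 0" using pd by (simp add: pos_def_def)
  have "isCont g x" using cont by (simp add: continuous_on_eq_continuous_at)
  then obtain d where d: "d > 0" "\<And>y. dist y x < d \<Longrightarrow> dist (g y) (g x) < g x / 2"
    using gx unfolding continuous_at_eps_delta by (metis half_gt_zero)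
  have "min (g x / 2) d \<le> lip_envelope g x"
  proof (rule lip_envelope_ge)
    fix y
    show "min (g x / 2) d \<le> g y + norm (x - y)"
    proof (cases "dist y x < d")
      case True
      then have "\<bar>g y - g x\<bar> < g x / 2" using d(2) by (simp add: dist_real_def)
      then have "g y > g x / 2" by linarith
      then have "g x / 2 \<le> g y + norm (x - y)" using norm_ge_zero[of "x - y"] by linarith
      then show ?thesis by (simp add: min_le_iff_disj)
    next
      case False
      then show ?thesis using g_nonneg[of y] by (simp add: dist_norm norm_minus_commute)
    qed
  qed
  then show "lip_envelope g x > 0" using gx d(1) by linarith
qed

end

lemma loc_lipschitz_continuous:
  fixes f :: "'a::{real_normed_vector,perfect_space} \<Rightarrow> 'b::metric_space"
  assumes "loc_lipschitz f"
  shows "continuous_on UNIV f"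
proof -
  have "isCont f x" for x
  proof -
    obtain u L where u: "u > 0" "lipschitz_on L (cball x u) f"
      using assms unfolding loc_lipschitz_def by blast
    have "continuous_on (cball x u) f" using u(2) by (rule lipschitz_on_continuous_on)
    moreover have "x \<in> interior (cball x u)" using u(1) by simp
    ultimately show ?thesis using continuous_on_interior by blast
  qed
  then show ?thesis by (simp add: continuous_on_eq_continuous_at)
qed

definition dissipation_envelope :: "('a::euclidean_space \<Rightarrow> 'a) \<Rightarrow> ('a \<Rightarrow> 'a) \<Rightarrow> 'a \<Rightarrow> real" where
  "dissipation_envelope gV f = lip_envelope (\<lambda>y. - (gV y \<bullet> f y))"

lemma dissipation_envelope_properties:
  assumes f_lip: "loc_lipschitz f" and f0: "f 0 = 0" and lyap: "lyapunov V gV f"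
  defines "W \<equiv> dissipation_envelope gV f"
  shows "loc_lipschitz W" "pos_def W" "continuous_on UNIV W"
    and "\<And>x. W x \<le> - (gV x \<bullet> f x)" "\<And>x y. W x \<le> W y + norm (x - y)"
proof -
  let ?g = "\<lambda>y. - (gV y \<bullet> f y)"
  have g_nonneg: "?g y \<ge> 0" for y
    using lyapunov_dissipative[OF lyap f0] by simp
  have "continuous_on UNIV gV" using lyap by (simp add: lyapunov_def C1_with_gradient_def)
  then have "continuous_on UNIV ?g"
    using loc_lipschitz_continuous[OF f_lip] by (intro continuous_intros)
  moreover have "pos_def ?g" using lyap f0 by (auto simp: lyapunov_def pos_def_def)
  ultimately show "pos_def W"
    unfolding W_def dissipation_envelope_def by (rule lip_envelope_pos_def[OF g_nonneg])
  show "loc_lipschitz W" "continuous_on UNIV W" "\<And>x. W x \<le> ?g x"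
    "\<And>x y. W x \<le> W y + norm (x - y)"
    unfolding W_def dissipation_envelope_def
    by (rule lip_envelope_loc_lipschitz lip_envelope_continuous lip_envelope_below
        lip_envelope_lipschitz_step, rule g_nonneg)+
qed

section \<open>Part (ii): a uniform decrease rate on the horizon b / lf x\<close>

text \<open>A function \<phi> of time obeying the quadratic bound of the comparison lemma on
  [0, b/L] and nonincreasing there decreases at the uniform rate
  A^2 / (2 (1 + A + b exp b n)): before the vertex A / S of the parabola
  the quadratic term costs at most half of the linear one, after it monotonicity takes over.\<close>
lemma parabola_uniform_rate:
  fixes \<phi> :: "real \<Rightarrow> real"
  assumes A: "A > 0" and L: "L > 0" and b: "b > 0" and n: "n > 0"
    and S: "S = L * exp b * n" and h: "0 \<le> h" "h \<le> b / L"
    and parabola: "\<And>t. 0 \<le> t \<Longrightarrow> t \<le> b / L \<Longrightarrow> \<phi> t \<le> \<phi> 0 - A * t + S * t\<^sup>2 / 2"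
    and mono: "\<And>s t. 0 \<le> s \<Longrightarrow> s \<le> t \<Longrightarrow> \<phi> t \<le> \<phi> s"
  shows "\<phi> h \<le> \<phi> 0 - h * (A\<^sup>2 / (2 * (1 + A + b * exp b * n)))"
proof -
  define rate where "rate = A\<^sup>2 / (2 * (1 + A + b * exp b * n))"
  have S_pos: "S > 0" using S L n by simp
  have den: "1 + A + b * exp b * n > 0" using A b n by (simp add: add_pos_pos)
  show ?thesis
  proof (cases "h \<le> A / S")
    case True
    have "S * h \<le> A" using True S_pos by (simp add: field_simps)
    then have "S * h\<^sup>2 / 2 \<le> A * h / 2"
      using h(1) by (simp add: power2_eq_square mult_right_mono mult.assoc[symmetric])
    moreover have "rate \<le> A / 2"
      unfolding rate_def using A den b n by (simp add: field_simps power2_eq_square)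
    then have "h * rate \<le> h * (A / 2)" using h(1) by (rule mult_left_mono)
    moreover have "h * (A / 2) = A * h / 2" by simp
    ultimately show ?thesis using parabola[OF h] unfolding rate_def[symmetric] by linarith
  next
    case False
    define t0 where "t0 = A / S"
    have t0: "0 \<le> t0" "t0 \<le> h" using False A S_pos by (auto simp: t0_def)
    have "\<phi> h \<le> \<phi> t0" by (rule mono[OF t0])
    also have "\<dots> \<le> \<phi> 0 - A * t0 + S * t0\<^sup>2 / 2" using parabola t0 h by auto
    also have "\<dots> = \<phi> 0 - A\<^sup>2 / (2 * S)"
      using S_pos by (simp add: t0_def field_simps power2_eq_square)
    also have "\<dots> \<le> \<phi> 0 - h * rate"
    proof -
      have "rate \<le> A\<^sup>2 / (2 * (b * exp b * n))"
        unfolding rate_def using A den b n by (intro divide_left_mono) auto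
      then have "h * rate \<le> (b / L) * (A\<^sup>2 / (2 * (b * exp b * n)))"
        using h den by (intro mult_mono) (auto simp: rate_def)
      also have "\<dots> = A\<^sup>2 / (2 * S)" using S L b n by (simp add: field_simps)
      finally show ?thesis by simp
    qed
    finally show ?thesis unfolding rate_def .
  qed
qed

definition horizon_rate :: "real \<Rightarrow> ('a::real_normed_vector \<Rightarrow> real) \<Rightarrow> 'a \<Rightarrow> real" where
  "horizon_rate b W x = (W x)\<^sup>2 / (2 * (1 + W x + b * exp b * norm x))"

lemma horizon_rate_properties:
  assumes "b > 0" "continuous_on UNIV W" "pos_def W"
  shows "continuous_on UNIV (horizon_rate b W)" "pos_def (horizon_rate b W)"
proof -
  have "W x \<ge> 0" for x using assms(3) by (cases "x = 0") (auto simp: pos_def_def less_imp_le)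
  then have den: "2 * (1 + W x + b * exp b * norm x) > 0" for x
    using assms(1) by (simp add: add_pos_nonneg)
  show "continuous_on UNIV (horizon_rate b W)"
    unfolding horizon_rate_def using den assms(2)
    by (intro continuous_intros) (auto simp: less_imp_neq[symmetric])
  show "pos_def (horizon_rate b W)"
    using assms(3) den unfolding horizon_rate_def pos_def_def by auto
qed

text \<open>Part (ii) for a 1-Lipschitz minorant W: its decay along the orbit is bounded by
  the displacement of the orbit, which gives the parabola bound.\<close>
lemma horizon_decrease:
  assumes lyap: "lyapunov V gV f" and f0: "f 0 = 0" and fl: "is_flow f z"
    and lf: "sublevel_lipschitz_bound V f lf" "lf x > 0" and b: "b > 0"
    and W_le: "\<And>y. W y \<le> - (gV y \<bullet> f y)" and W_pd: "pos_def W"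
    and W_lip: "\<And>x y. W x \<le> W y + norm (x - y)"
    and h: "0 \<le> h" "h \<le> b / lf x"
  shows "V (z h x) \<le> V x - h * horizon_rate b W x"
proof (cases "x = 0")
  case True
  with lyapunov_below_initial[OF lyap f0 fl h(1), of 0] W_pd show ?thesis
    by (simp add: horizon_rate_def pos_def_def)
next
  case False
  have C1: "C1_with_gradient V gV" using lyap by (simp add: lyapunov_def)
  define S where "S = lf x * exp b * norm x"
  have parabola: "V (z t x) \<le> V (z 0 x) - W x * t + S * t\<^sup>2 / 2"
    if t: "0 \<le> t" "t \<le> b / lf x" for t
  proof (simp only: flow_initial[OF fl], rule lyapunov_quadratic_decrease[OF C1 fl t(1) W_le])
    fix s assume "0 < s" "s < t"
    then have "norm (z s x - x) \<le> s * S"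
      using orbit_localisation(2)[OF lyap f0 fl lf(1) lf(2) False b, of s] t by (simp add: S_def)
    then show "W x - W (z s x) \<le> S * s"
      using W_lip[of x "z s x"] by (simp add: norm_minus_commute mult.commute)
  qed
  have "V (z h x) \<le> V (z 0 x) - h * ((W x)\<^sup>2 / (2 * (1 + W x + b * exp b * norm x)))"
  proof (rule parabola_uniform_rate[OF _ lf(2) b _ S_def h parabola])
    show "W x > 0" "norm x > 0" using W_pd False by (auto simp: pos_def_def)
  qed (auto intro: lyapunov_nonincreasing_along_flow[OF C1 fl lyapunov_dissipative[OF lyap f0]])
  then show ?thesis by (simp add: flow_initial[OF fl] horizon_rate_def)
qed

lemma short_horizon_decrease:
  assumes f_lip: "loc_lipschitz f" and f0: "f 0 = 0" and fl: "is_flow f z"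
    and lyap: "lyapunov V gV f"
    and lf: "sublevel_lipschitz_bound V f lf" "\<forall>x. lf x > 0" and b: "b > 0"
  shows "\<exists>Wt. continuous_on UNIV Wt \<and> pos_def Wt \<and>
           (\<forall>x. \<forall>h\<in>{0..b / lf x}. V (z h x) \<le> V x - h * Wt x)"
proof (intro exI conjI allI ballI)
  note envelope = dissipation_envelope_properties[OF f_lip f0 lyap]
  let ?Wt = "horizon_rate b (dissipation_envelope gV f)"
  show "continuous_on UNIV ?Wt" "pos_def ?Wt"
    using horizon_rate_properties[OF b envelope(3,2)] by blast+
  fix x h assume "h \<in> {0..b / lf x}"
  then show "V (z h x) \<le> V x - h * ?Wt x"
    using horizon_decrease[OF lyap f0 fl lf(1) _ b envelope(4,2,5)] lf(2) by auto
qed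

section \<open>Part (iii): decrease at a fraction of a given Lipschitz rate\<close>

text \<open>For a positive definite minorant W with ball-Lipschitz bound lW, the decay
  of W along the orbit is at most lW x * lf x * exp b * norm x per unit time;
  the step-size bound then makes the quadratic error at most (1 - \<lambda>) h W x.\<close>
lemma fraction_decrease:
  assumes lyap: "lyapunov V gV f" and f0: "f 0 = 0" and fl: "is_flow f z"
    and lf: "sublevel_lipschitz_bound V f lf" "lf x > 0" and b: "b > 0"
    and W_le: "\<And>y. W y \<le> - (gV y \<bullet> f y)" and W_pd: "pos_def W"
    and lW: "ball_lipschitz_bound b W lW" "lW x > 0" and lam: "lam < 1"
    and x: "x \<noteq> 0" and h: "0 \<le> h" "h \<le> b / lf x"
    and h_small: "h \<le> (1 - lam) * exp (- b) * W x / (norm x * lW x * lf x)"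
  shows "V (z h x) \<le> V x - lam * h * W x"
proof -
  have C1: "C1_with_gradient V gV" using lyap by (simp add: lyapunov_def)
  define K where "K = lW x * (lf x * exp b * norm x)"
  have quadratic: "V (z h x) \<le> V x - W x * h + K * h\<^sup>2 / 2"
  proof (rule lyapunov_quadratic_decrease[OF C1 fl h(1) W_le])
    fix s assume s: "0 < s" "s < h"
    note orbit = orbit_localisation[OF lyap f0 fl lf x b, of s]
    have "1 \<le> exp b" using b by simp
    then have "norm x \<le> exp b * norm x" using mult_right_mono[of 1 "exp b" "norm x"] by simp
    then have "\<bar>W (z s x) - W x\<bar> \<le> lW x * norm (z s x - x)"
      using ball_lipschitz_boundD[OF lW(1) x] orbit x s h by auto
    also have "\<dots> \<le> lW x * (s * (lf x * exp b * norm x))"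
      using orbit x s h lW(2) by (intro mult_left_mono) auto
    finally show "W x - W (z s x) \<le> K * s" by (simp add: K_def algebra_simps)
  qed
  have "K * h \<le> K * ((1 - lam) * exp (- b) * W x / (norm x * lW x * lf x))"
    using h_small lW(2) lf(2) by (intro mult_left_mono) (auto simp: K_def)
  also have "\<dots> = (1 - lam) * W x"
    using lW(2) lf(2) x by (simp add: K_def exp_minus field_simps)
  finally have "K * h\<^sup>2 / 2 \<le> (1 - lam) * W x * h / 2"
    using h(1) by (simp add: power2_eq_square mult_right_mono mult.assoc[symmetric])
  moreover have "0 \<le> (1 - lam) * W x * h"
    using W_pd x lam h(1) by (auto simp: pos_def_def intro!: mult_nonneg_nonneg)
  ultimately show ?thesis using quadratic by (simp add: algebra_simps)
qed

lemma step_bound_decrease: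
  assumes lyap: "lyapunov V gV f" and f0: "f 0 = 0" and fl: "is_flow f z"
    and lf: "sublevel_lipschitz_bound V f lf" "\<forall>x. lf x > 0" and b: "b > 0"
    and W_le: "\<forall>y. W y \<le> - (gV y \<bullet> f y)" and W_pd: "pos_def W"
    and lW: "pos_def lW" "ball_lipschitz_bound b W lW" and lam: "lam \<in> {0<..<1}"
    and \<phi>: "\<forall>x. x \<noteq> 0 \<longrightarrow> \<phi> x \<le> min (b / lf x)
                   ((1 - lam) * exp (- b) * W x / (norm x * lW x * lf x))"
    and h: "h \<in> {0..\<phi> x}"
  shows "V (z h x) \<le> V x - lam * h * W x"
proof (cases "x = 0")
  case True
  then show ?thesis
    using lyapunov_below_initial[OF lyap f0 fl, of h 0] h W_pd by (simp add: pos_def_def)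
next
  case False
  have "lW x > 0" using lW(1) False by (simp add: pos_def_def)
  moreover have "0 \<le> h" "h \<le> b / lf x"
    "h \<le> (1 - lam) * exp (- b) * W x / (norm x * lW x * lf x)"
    using h \<phi> False by auto
  ultimately show ?thesis
    using fraction_decrease[OF lyap f0 fl lf(1) _ b _ W_pd lW(2) _ _ False] lf(2) W_le lam
    by simp
qed

theorem lemma4p3:
  fixes f :: "real^'n \<Rightarrow> real^'n"
    and z :: "real \<Rightarrow> real^'n \<Rightarrow> real^'n"
    and V :: "real^'n \<Rightarrow> real"
    and gV :: "real^'n \<Rightarrow> real^'n"
  assumes f_lip: "loc_lipschitz f"
    and f0: "f 0 = 0"
    and flow: "is_flow f z"
    and lyap: "lyapunov V gV f"
  shows
    "(\<exists>W :: real^'n \<Rightarrow> real. loc_lipschitz W \<and> pos_def W \<and> (\<forall>x. W x \<le> - (gV x \<bullet> f x)))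
   \<and> (\<forall>lf :: real^'n \<Rightarrow> real.
        continuous_on UNIV lf \<and> (\<forall>x. lf x > 0) \<and>
        (\<forall>x. x \<noteq> 0 \<longrightarrow> (\<forall>y w. y \<noteq> w \<and> max (V y) (V w) \<le> V x \<longrightarrow>
             norm (f y - f w) / norm (y - w) \<le> lf x))
        \<longrightarrow> (\<forall>b>0. \<exists>Wt :: real^'n \<Rightarrow> real. continuous_on UNIV Wt \<and> pos_def Wt \<and>
               (\<forall>x. \<forall>h\<in>{0..b / lf x}. V (z h x) \<le> V x - h * Wt x)))
   \<and> (\<forall>b>0. \<forall>lf :: real^'n \<Rightarrow> real. \<forall>W :: real^'n \<Rightarrow> real. \<forall>lW :: real^'n \<Rightarrow> real.
        continuous_on UNIV lf \<and> (\<forall>x. lf x > 0) \<and>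
        (\<forall>x. x \<noteq> 0 \<longrightarrow> (\<forall>y w. y \<noteq> w \<and> max (V y) (V w) \<le> V x \<longrightarrow>
             norm (f y - f w) / norm (y - w) \<le> lf x)) \<and>
        loc_lipschitz W \<and> pos_def W \<and> (\<forall>x. W x \<le> - (gV x \<bullet> f x)) \<and>
        continuous_on UNIV lW \<and> pos_def lW \<and>
        (\<forall>x. x \<noteq> 0 \<longrightarrow> (\<forall>y w. y \<noteq> w \<and> max (norm y) (norm w) \<le> exp b * norm x \<longrightarrow>
             \<bar>W y - W w\<bar> / norm (y - w) \<le> lW x)) \<and>
        (\<exists>\<epsilon>>0. \<exists>c>0. \<forall>x\<in>ball 0 \<epsilon>. norm x * lW x \<le> c * W x)
        \<longrightarrow> (\<forall>lam\<in>{0<..<1}. \<forall>\<phi> :: real^'n \<Rightarrow> real.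
               continuous_on UNIV \<phi> \<and> (\<forall>x. \<phi> x > 0) \<and>
               (\<forall>x. x \<noteq> 0 \<longrightarrow> \<phi> x \<le> min (b / lf x)
                   ((1 - lam) * exp (- b) * W x / (norm x * lW x * lf x)))
               \<longrightarrow> (\<forall>x. \<forall>h\<in>{0..\<phi> x}. V (z h x) \<le> V x - lam * h * W x)))"
proof -
  have "\<exists>W. loc_lipschitz W \<and> pos_def W \<and> (\<forall>x. W x \<le> - (gV x \<bullet> f x))"
    using dissipation_envelope_properties(1,2,4)[OF f_lip f0 lyap] by blast
  \<comment> \<open>with the two Lipschitz-bound hypotheses folded, parts (ii) and (iii) are instances of
      short_horizon_decrease and step_bound_decrease\<close>
  then show ?thesis
    unfolding sublevel_lipschitz_bound_def[symmetric] ball_lipschitz_bound_def[symmetric]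
    by (intro conjI allI impI ballI; (elim conjE)?)
      (assumption | rule short_horizon_decrease[OF f_lip f0 flow lyap]
        step_bound_decrease[OF lyap f0 flow]; assumption)+
qed

end
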